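(* For sequences $(r_n)_{n\in\mathbb Z},(r'_n)_{n\in\mathbb Z}$ with $0<r_n,r'_n<1$ and $(\theta_n)_{n\in\mathbb Z},(\theta'_n)_{n\in\mathbb Z}$ with $\theta_n,\theta'_n\in[0,2\pi)$ and $\theta_0=\theta_1=\theta'_0=\theta'_1=0$, define \[ U_{r,\theta}=\sum_{n\in\mathbb Z}|e_1^{n-1}\rangle\langle r_ne_1^n+e^{i\theta_n}s_ne_2^n|+|e_2^{n+1}\rangle\langle -e^{-i\theta_n}s_ne_1^n+r_ne_2^n|,\quad s_n=\sqrt{1-r_n^2}, \] and $U_{r',\theta'}$ analogously. Then $U_{r,\theta}$ and $U_{r',\theta'}$ are unitary equivalent if and only if $r=r'$ and $\theta=\theta'$.
   Context: Let $\mathcal H_n=\mathbb C^2$ for $n\in\mathbb Z$, $\mathcal H=\bigoplus_{n\in\mathbb Z}\mathcal H_n$, and $\{e_1^n,e_2^n\}$ the standard basis of $\mathcal H_n$. Dirac notation: $|x\rangle\langle y|$ is the operator $z\mapsto\langle y,z\rangle x$ (inner product conjugate-linear in the first argument). Since a unitary $U$ and $e^{i\lambda}U$ are identified, two unitaries $U_1,U_2$ on $\mathcal H$ are called unitary equivalent if there exist $\lambda\in\mathbb R$ and a unitary $W=\bigoplus_{n\in\mathbb Z}W_n$ (each $W_n$ a unitary on $\mathcal H_n$) with $e^{i\lambda}WU_1W^*=U_2$. *)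

theory Defs
  imports "HOL-Analysis.Analysis"
begin

text \<open>The Hilbert space H = direct sum over n in Z of C^2 is modelled by
  vectors x :: int => complex^2 with square-summable norms.  Component 1 of
  x n is the coefficient of e_1^n, component 2 that of e_2^n.\<close>

type_synonym hvec = "int \<Rightarrow> complex ^ 2"

definition l2vec :: "hvec \<Rightarrow> bool" where
  "l2vec x \<longleftrightarrow> (\<lambda>n. (norm (x n))\<^sup>2) summable_on (UNIV :: int set)"

definition cinner2 :: "complex ^ 2 \<Rightarrow> complex ^ 2 \<Rightarrow> complex" where
  "cinner2 y z = cnj (y $ 1) * z $ 1 + cnj (y $ 2) * z $ 2"

definition mk2 :: "complex \<Rightarrow> complex \<Rightarrow> complex ^ 2" where
  "mk2 a b = (\<chi> i. if i = 1 then a else b)"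

definition sfun :: "(int \<Rightarrow> real) \<Rightarrow> int \<Rightarrow> real" where
  "sfun r n = sqrt (1 - (r n)\<^sup>2)"

definition vvec :: "(int \<Rightarrow> real) \<Rightarrow> (int \<Rightarrow> real) \<Rightarrow> int \<Rightarrow> complex ^ 2" where
  "vvec r \<theta> n = mk2 (complex_of_real (r n))
                     (exp (\<i> * complex_of_real (\<theta> n)) * complex_of_real (sfun r n))"

definition wvec :: "(int \<Rightarrow> real) \<Rightarrow> (int \<Rightarrow> real) \<Rightarrow> int \<Rightarrow> complex ^ 2" where
  "wvec r \<theta> n = mk2 (- exp (- \<i> * complex_of_real (\<theta> n)) * complex_of_real (sfun r n))
                     (complex_of_real (r n))"

text \<open>U_{r,theta} = sum_n |e_1^{n-1}><v_n| + |e_2^{n+1}><w_n|, i.e.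
  (U x)_m has e_1-coefficient <v_{m+1}, x_{m+1}> and e_2-coefficient <w_{m-1}, x_{m-1}>.\<close>
definition Uop :: "(int \<Rightarrow> real) \<Rightarrow> (int \<Rightarrow> real) \<Rightarrow> hvec \<Rightarrow> hvec" where
  "Uop r \<theta> x = (\<lambda>m. mk2 (cinner2 (vvec r \<theta> (m + 1)) (x (m + 1)))
                          (cinner2 (wvec r \<theta> (m - 1)) (x (m - 1))))"

definition cadj2 :: "complex ^ 2 ^ 2 \<Rightarrow> complex ^ 2 ^ 2" where
  "cadj2 M = (\<chi> i j. cnj (M $ j $ i))"

definition unitary2 :: "complex ^ 2 ^ 2 \<Rightarrow> bool" where
  "unitary2 M \<longleftrightarrow> M ** cadj2 M = mat 1 \<and> cadj2 M ** M = mat 1"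

definition blockop :: "(int \<Rightarrow> complex ^ 2 ^ 2) \<Rightarrow> hvec \<Rightarrow> hvec" where
  "blockop W x = (\<lambda>n. W n *v x n)"

definition unitary_equiv :: "(hvec \<Rightarrow> hvec) \<Rightarrow> (hvec \<Rightarrow> hvec) \<Rightarrow> bool" where
  "unitary_equiv U1 U2 \<longleftrightarrow>
     (\<exists>lam::real. \<exists>W. (\<forall>n. unitary2 (W n)) \<and>
        (\<forall>x. l2vec x \<longrightarrow>
           (\<lambda>n. exp (\<i> * complex_of_real lam) *s
                  blockop W (U1 (blockop (\<lambda>k. cadj2 (W k)) x)) n) = U2 x))"

end

theory Submission
  imports Defs
begin

text \<open>Test a unitary equivalence e^{i\<lambda>} W U W^* = U' on the basis vectors e_1^n, e_2^n. Since U maps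
  the n-th block into blocks n-1 and n+1 only, and r'_n \<noteq> 0, every W_n must be diagonal,
  W_n = diag(a_n, b_n) with |a_n| = |b_n| = 1. Comparing moduli then gives r = r'; comparing phases
  gives a_n = c a_{n-1} and b_{n+1} = c^{-1} b_n with c = e^{i\<lambda>}, and
  e^{i(\<theta>_n - \<theta>'_n)} = c a_{n-1} b_n^{-1}. Hence the phase differences form a geometric sequence
  with ratio c^2; the normalisation \<theta>_0 = \<theta>_1 = \<theta>'_0 = \<theta>'_1 = 0 forces it to be constantly 1,
  and the angles agree because they lie in [0, 2\<pi>).\<close>

lemma mk2_nth [simp]: "mk2 a b $ 1 = a" "mk2 a b $ 2 = b"
  by (simp_all add: mk2_def)

lemma mk2_eq_iff [simp]: "mk2 a b = mk2 a' b' \<longleftrightarrow> a = a' \<and> b = b'"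
  by (metis mk2_nth)

lemma vector_smult_mk2 [simp]: "c *s mk2 a b = mk2 (c * a) (c * b)"
  by (auto simp: mk2_def vec_eq_iff)

lemma matrix_vector_mult_mk2 [simp]:
  "(M :: complex ^ 2 ^ 2) *v mk2 a b = mk2 (M$1$1 * a + M$1$2 * b) (M$2$1 * a + M$2$2 * b)"
  by (simp add: mk2_def vec_eq_iff matrix_vector_mult_def sum_2 forall_2)

lemma cinner2_mk2 [simp]: "cinner2 y (mk2 a b) = cnj (y $ 1) * a + cnj (y $ 2) * b"
  by (simp add: cinner2_def)

lemma cadj2_nth [simp]: "cadj2 M $ i $ j = cnj (M $ j $ i)"
  by (simp add: cadj2_def)

lemma unimodular_mult_cnj: "cmod u = 1 \<Longrightarrow> u * cnj u = 1"
  by (metis complex_norm_square of_real_1 one_power2)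

lemma unitary2_column_norm:
  assumes "unitary2 M"
  shows "(cmod (M$1$j))\<^sup>2 + (cmod (M$2$j))\<^sup>2 = 1"
proof -
  have "(cadj2 M ** M) $ j $ j = 1"
    using assms by (simp add: unitary2_def mat_def)
  then have "M$1$j * cnj (M$1$j) + M$2$j * cnj (M$2$j) = 1"
    by (simp add: matrix_matrix_mult_def sum_2 mult.commute)
  then have "complex_of_real ((cmod (M$1$j))\<^sup>2 + (cmod (M$2$j))\<^sup>2) = 1"
    by (simp only: of_real_add complex_norm_square)
  then show ?thesis
    using of_real_eq_1_iff by blast
qed

lemma cadj2_mat_1: "cadj2 (mat 1) = (mat 1 :: complex ^ 2 ^ 2)"
  by (auto simp: vec_eq_iff mat_def)

lemma unitary_equiv_refl: "unitary_equiv U U"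
proof -
  have "blockop (\<lambda>_. mat 1) x = x" for x
    by (simp add: blockop_def)
  then show ?thesis
    unfolding unitary_equiv_def
    by (intro exI[of _ 0] exI[of _ "\<lambda>_. mat 1"]) (simp add: cadj2_mat_1 unitary2_def)
qed

definition delta_vec :: "int \<Rightarrow> complex ^ 2 \<Rightarrow> hvec" where
  "delta_vec n z = (\<lambda>k. if k = n then z else 0)"

lemma l2vec_delta_vec: "l2vec (delta_vec n z)"
proof -
  have "(\<lambda>k. (norm (delta_vec n z k))\<^sup>2) summable_on {n}"
    by simp
  then show ?thesis
    unfolding l2vec_def by (rule summable_on_cong_neutral[THEN iffD1, rotated -1]) (auto simp: delta_vec_def)
qed

lemma blockop_apply: "blockop W x n = W n *v x n"
  by (simp add: blockop_def)

lemma blockop_delta_vec: "blockop W (delta_vec n z) = delta_vec n (W n *v z)"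
  by (auto simp: blockop_def delta_vec_def)

lemma Uop_delta_vec_pred: "Uop r \<theta> (delta_vec n z) (n - 1) = mk2 (cinner2 (vvec r \<theta> n) z) 0"
  by (simp add: Uop_def delta_vec_def cinner2_def)

lemma Uop_delta_vec_succ: "Uop r \<theta> (delta_vec n z) (n + 1) = mk2 0 (cinner2 (wvec r \<theta> n) z)"
  by (simp add: Uop_def delta_vec_def cinner2_def)

lemma int_geometric_seq_eq_1:
  fixes g :: "int \<Rightarrow> 'a :: field"
  assumes step: "\<And>n. g (n + 1) = q * g n" and "g 0 = 1" and "g 1 = 1"
  shows "g n = 1"
proof -
  have "q = 1"
    using step[of 0] assms by simp
  then have const: "g (n + 1) = g n" for n
    using step by simp
  show ?thesis
  proof (induction n rule: int_induct[of _ 0])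
    case (step2 i)
    then show ?case
      using const[of "i - 1"] by simp
  qed (use const \<open>g 0 = 1\<close> in auto)
qed

lemma angle_eq_of_exp_diff_eq_1:
  assumes "exp (\<i> * complex_of_real (\<alpha> - \<beta>)) = 1"
    and "0 \<le> \<alpha>" "\<alpha> < 2 * pi" "0 \<le> \<beta>" "\<beta> < 2 * pi"
  shows "\<alpha> = \<beta>"
proof -
  have "exp (\<i> * complex_of_real \<alpha>) = exp (\<i> * complex_of_real (\<alpha> - \<beta>)) * exp (\<i> * complex_of_real \<beta>)"
    by (simp add: exp_add[symmetric] algebra_simps)
  then have "exp (\<i> * complex_of_real \<alpha>) = exp (\<i> * complex_of_real \<beta>)"
    using assms(1) by simp
  then have "Arg2pi (exp (\<i> * complex_of_real \<alpha>)) = Arg2pi (exp (\<i> * complex_of_real \<beta>))"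
    by simp
  then show ?thesis
    using assms(2-5) by (simp add: Arg2pi_exp)
qed

locale block_intertwining =
  fixes r \<theta> r' \<theta>' :: "int \<Rightarrow> real" and c :: complex and W :: "int \<Rightarrow> complex ^ 2 ^ 2"
  assumes unitary_W: "unitary2 (W n)"
    and unimodular_c: "cmod c = 1"
    and intertwines: "l2vec x \<Longrightarrow>
      (\<lambda>n. c *s blockop W (Uop r \<theta> (blockop (\<lambda>k. cadj2 (W k)) x)) n) = Uop r' \<theta>' x"
    and r_pos: "0 < r n" and r_lt_1: "r n < 1" and r'_pos: "0 < r' n"
begin

lemma intertwines_delta_vec:
  "c *s (W (n - 1) *v mk2 (cinner2 (vvec r \<theta> n) (cadj2 (W n) *v z)) 0)
     = mk2 (cinner2 (vvec r' \<theta>' n) z) 0"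
  "c *s (W (n + 1) *v mk2 0 (cinner2 (wvec r \<theta> n) (cadj2 (W n) *v z)))
     = mk2 0 (cinner2 (wvec r' \<theta>' n) z)"
  using fun_cong[OF intertwines[OF l2vec_delta_vec[of n z]], of "n - 1"]
    fun_cong[OF intertwines[OF l2vec_delta_vec[of n z]], of "n + 1"]
  by (simp_all only: blockop_delta_vec Uop_delta_vec_pred Uop_delta_vec_succ blockop_apply)

lemma W_lower_zero: "W m $ 2 $ 1 = 0"
proof -
  let ?p = "cinner2 (vvec r \<theta> (m + 1)) (cadj2 (W (m + 1)) *v mk2 1 0)"
  have "c * W m $1$1 * ?p = r' (m + 1)" and "c * W m $2$1 * ?p = 0"
    using intertwines_delta_vec(1)[of "m + 1" "mk2 1 0"] by (simp_all add: vvec_def mult.assoc)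
  moreover have "r' (m + 1) \<noteq> 0"
    using r'_pos[of "m + 1"] by simp
  ultimately show ?thesis
    using unimodular_c by auto
qed

lemma W_upper_zero: "W m $ 1 $ 2 = 0"
proof -
  let ?p = "cinner2 (wvec r \<theta> (m - 1)) (cadj2 (W (m - 1)) *v mk2 0 1)"
  have "c * W m $1$2 * ?p = 0" and "c * W m $2$2 * ?p = r' (m - 1)"
    using intertwines_delta_vec(2)[of "m - 1" "mk2 0 1"] by (simp_all add: wvec_def mult.assoc)
  moreover have "r' (m - 1) \<noteq> 0"
    using r'_pos[of "m - 1"] by simp
  ultimately show ?thesis
    using unimodular_c by auto
qed

lemma unimodular_W_diag: "cmod (W n $ 1 $ 1) = 1" "cmod (W n $ 2 $ 2) = 1"
  using unitary2_column_norm[OF unitary_W, of n 1] unitary2_column_norm[OF unitary_W, of n 2]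
  by (simp_all add: W_lower_zero W_upper_zero abs_square_eq_1)

lemma modulus_relation: "c * W (n - 1) $ 1 $ 1 * cnj (W n $ 1 $ 1) * r n = r' n"
  using intertwines_delta_vec(1)[of n "mk2 1 0"]
  by (simp add: vvec_def W_lower_zero W_upper_zero algebra_simps)

lemma r_eq: "r' n = r n"
proof -
  have "cmod (c * W (n - 1) $ 1 $ 1 * cnj (W n $ 1 $ 1) * r n) = r n"
    using r_pos[of n] by (simp add: norm_mult unimodular_c unimodular_W_diag)
  then show ?thesis
    using modulus_relation[of n] r'_pos[of n] by simp
qed

lemma W11_succ: "W n $ 1 $ 1 = c * W (n - 1) $ 1 $ 1"
proof -
  have step: "c * W (n - 1) $ 1 $ 1 * cnj (W n $ 1 $ 1) = 1"
    using modulus_relation[of n] r_pos[of n] by (simp add: r_eq)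
  have "W n $ 1 $ 1 = W n $ 1 $ 1 * (c * W (n - 1) $ 1 $ 1 * cnj (W n $ 1 $ 1))"
    by (simp add: step)
  also have "\<dots> = c * W (n - 1) $ 1 $ 1 * (W n $ 1 $ 1 * cnj (W n $ 1 $ 1))"
    by (simp add: ac_simps)
  finally show ?thesis
    by (simp add: unimodular_mult_cnj unimodular_W_diag)
qed

lemma W22_succ_cnj: "cnj (W (n + 1) $ 2 $ 2) = c * cnj (W n $ 2 $ 2)"
proof -
  have "c * W (n + 1) $ 2 $ 2 * cnj (W n $ 2 $ 2) * r n = r' n"
    using intertwines_delta_vec(2)[of n "mk2 0 1"]
    by (simp add: wvec_def W_lower_zero W_upper_zero algebra_simps)
  then have "c * W (n + 1) $ 2 $ 2 * cnj (W n $ 2 $ 2) = 1"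
    using r_pos[of n] by (simp add: r_eq)
  then have "cnj (c * W (n + 1) $ 2 $ 2 * cnj (W n $ 2 $ 2)) = 1"
    by simp
  then have step: "cnj c * cnj (W (n + 1) $ 2 $ 2) * W n $ 2 $ 2 = 1"
    by simp
  have "cnj (W (n + 1) $ 2 $ 2)
      = (c * cnj c) * cnj (W (n + 1) $ 2 $ 2) * (W n $ 2 $ 2 * cnj (W n $ 2 $ 2))"
    by (simp add: unimodular_mult_cnj unimodular_c unimodular_W_diag)
  also have "\<dots> = c * cnj (W n $ 2 $ 2) * (cnj c * cnj (W (n + 1) $ 2 $ 2) * W n $ 2 $ 2)"
    by (simp add: ac_simps)
  finally show ?thesis
    by (simp add: step)
qed

lemma phase_relation: "exp (\<i> * complex_of_real (\<theta> n - \<theta>' n)) = c * W (n - 1) $ 1 $ 1 * cnj (W n $ 2 $ 2)"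
proof -
  let ?e = "exp (\<i> * complex_of_real (\<theta> n))" and ?e' = "exp (\<i> * complex_of_real (\<theta>' n))"
  have "sfun r n \<noteq> 0"
    using r_pos[of n] r_lt_1[of n] by (simp add: sfun_def power2_eq_1_iff)
  moreover have "c * W (n - 1) $ 1 $ 1 * cnj (W n $ 2 $ 2) * cnj ?e * sfun r n = cnj ?e' * sfun r' n"
    using intertwines_delta_vec(1)[of n "mk2 0 1"]
    by (simp add: vvec_def W_lower_zero W_upper_zero algebra_simps)
  moreover have "sfun r' n = sfun r n"
    by (simp add: sfun_def r_eq)
  ultimately have eq: "c * W (n - 1) $ 1 $ 1 * cnj (W n $ 2 $ 2) * cnj ?e = cnj ?e'"
    by simp
  have "c * W (n - 1) $ 1 $ 1 * cnj (W n $ 2 $ 2)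
      = c * W (n - 1) $ 1 $ 1 * cnj (W n $ 2 $ 2) * cnj ?e * ?e"
    using unimodular_mult_cnj[OF norm_exp_i_times[of "\<theta> n"]] by (simp add: ac_simps)
  also have "\<dots> = ?e * cnj ?e'"
    by (subst eq) (rule mult.commute)
  also have "\<dots> = exp (\<i> * complex_of_real (\<theta> n - \<theta>' n))"
    by (simp add: exp_cnj exp_add[symmetric] algebra_simps)
  finally show ?thesis ..
qed

lemma phase_step:
  "exp (\<i> * complex_of_real (\<theta> (n + 1) - \<theta>' (n + 1))) = c\<^sup>2 * exp (\<i> * complex_of_real (\<theta> n - \<theta>' n))"
proof -
  have "c * W n $ 1 $ 1 * cnj (W (n + 1) $ 2 $ 2) = c\<^sup>2 * (c * W (n - 1) $ 1 $ 1 * cnj (W n $ 2 $ 2))"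
    unfolding W11_succ[of n] W22_succ_cnj by (simp add: power2_eq_square algebra_simps)
  then show ?thesis
    using phase_relation[of n] phase_relation[of "n + 1"] by simp
qed

end

theorem theorem2p5:
  fixes r r' \<theta> \<theta>' :: "int \<Rightarrow> real"
  assumes "\<forall>n. 0 < r n \<and> r n < 1"
    and "\<forall>n. 0 < r' n \<and> r' n < 1"
    and "\<forall>n. 0 \<le> \<theta> n \<and> \<theta> n < 2 * pi"
    and "\<forall>n. 0 \<le> \<theta>' n \<and> \<theta>' n < 2 * pi"
    and "\<theta> 0 = 0" and "\<theta> 1 = 0" and "\<theta>' 0 = 0" and "\<theta>' 1 = 0"
  shows "unitary_equiv (Uop r \<theta>) (Uop r' \<theta>') \<longleftrightarrow> r = r' \<and> \<theta> = \<theta>'"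
proof
  assume "unitary_equiv (Uop r \<theta>) (Uop r' \<theta>')"
  then obtain \<phi> W where "\<forall>n. unitary2 (W n)" and "\<forall>x. l2vec x \<longrightarrow>
      (\<lambda>n. exp (\<i> * complex_of_real \<phi>) *s blockop W (Uop r \<theta> (blockop (\<lambda>k. cadj2 (W k)) x)) n)
        = Uop r' \<theta>' x"
    unfolding unitary_equiv_def by blast
  then interpret block_intertwining r \<theta> r' \<theta>' "exp (\<i> * complex_of_real \<phi>)" W
    using assms(1,2) by unfold_locales auto
  have "exp (\<i> * complex_of_real (\<theta> n - \<theta>' n)) = 1" for n
    by (rule int_geometric_seq_eq_1[where g = "\<lambda>n. exp (\<i> * complex_of_real (\<theta> n - \<theta>' n))",
          OF phase_step]) (simp_all add: assms(5-8))
  then have "\<theta> n = \<theta>' n" for n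
    using assms(3,4) angle_eq_of_exp_diff_eq_1 by blast
  then show "r = r' \<and> \<theta> = \<theta>'"
    using r_eq by auto
next
  assume "r = r' \<and> \<theta> = \<theta>'"
  then show "unitary_equiv (Uop r \<theta>) (Uop r' \<theta>')"
    by (simp add: unitary_equiv_refl)
qed

end
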